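(* Let $0<\gamma<1$, integers $n\ge p\ge2$, and $\beta_{\gamma,p}:=\min\left\{\frac{1-\gamma}{2p}\log\bigl(\frac{2p}{p+1}\bigr),\ \frac{1-\gamma}{8p^\gamma(p-1)^{1-\gamma}}\right\}$. Then $$\|C_\gamma^{(p)}\|_{1\to2}^2\le1+\frac{1}{\Gamma(\gamma)^2}H_{p-1}^{(2-2\gamma)}+\frac{1}{\Gamma(\gamma)^2p^{2-2\gamma}}\cdot\frac{1}{\beta_{\gamma,p}(2-\beta_{\gamma,p})},$$ where $H_m^{(s)}:=\sum_{j=1}^m j^{-s}$. Moreover there is an absolute constant $K$ (independent of $n,p,\gamma$) such that $$\|C_\gamma^{(p)}\|_{1\to2}\le\begin{cases}K/\sqrt{1/2-\gamma}, & 0<\gamma<\tfrac12,\\ K\sqrt{\log p}, & \gamma=\tfrac12,\\ K\,p^{\gamma-1/2}\big/\sqrt{(1-\gamma)(\gamma-1/2)}, & \tfrac12<\gamma<1.\end{cases}$$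
   Context: $\log$ is the natural logarithm and $\Gamma$ the Gamma function. $(\tilde c_\gamma)_i:=(-1)^i\binom{\gamma}{i}$ with $\binom{\gamma}{i}=\prod_{j=1}^{i}\frac{\gamma+1-j}{j}$. $C_\gamma^{(p)}$ is the inverse of the $n\times n$ lower-triangular Toeplitz matrix whose $r$-th subdiagonal ($r=0$ the main diagonal) equals $(\tilde c_\gamma)_r$ for $r\le p-1$ and $0$ for $r\ge p$. For a matrix $M$, $\|M\|_{1\to2}$ is the maximum $\ell_2$ norm of a column of $M$. *)

theory Defs
  imports "HOL-Analysis.Analysis" "Jordan_Normal_Form.Matrix"
begin

definition ctilde :: "real \<Rightarrow> nat \<Rightarrow> real" where
  "ctilde \<gamma> i = (-1) ^ i * (\<gamma> gchoose i)"

definition toepT :: "real \<Rightarrow> nat \<Rightarrow> nat \<Rightarrow> real mat" where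
  "toepT \<gamma> p n = mat n n (\<lambda>(i, j). if j \<le> i \<and> i - j \<le> p - 1 then ctilde \<gamma> (i - j) else 0)"

definition Cmat :: "real \<Rightarrow> nat \<Rightarrow> nat \<Rightarrow> real mat" where
  "Cmat \<gamma> p n = (THE M. M \<in> carrier_mat n n \<and> toepT \<gamma> p n * M = 1\<^sub>m n \<and> M * toepT \<gamma> p n = 1\<^sub>m n)"

definition norm12 :: "real mat \<Rightarrow> real" where
  "norm12 M = Max ((\<lambda>j. sqrt (\<Sum>i<dim_row M. (M $$ (i, j))\<^sup>2)) ` {..<dim_col M})"

definition genHarm :: "nat \<Rightarrow> real \<Rightarrow> real" where
  "genHarm m s = (\<Sum>j=1..m. 1 / (real j) powr s)"

definition betaC :: "real \<Rightarrow> nat \<Rightarrow> real" where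
  "betaC \<gamma> p = min ((1 - \<gamma>) / (2 * real p) * ln (2 * real p / (real p + 1)))
                     ((1 - \<gamma>) / (8 * real p powr \<gamma> * (real p - 1) powr (1 - \<gamma>)))"

end

(*
  C is the lower triangular Toeplitz matrix whose first column holds the coefficients c_k of
  1/q, where q is the power series (1 - X)^gamma truncated at degree p - 1.  Every column of C
  is a truncation of the first one, so the squared 1->2 norm is the sum of the c_k^2, k < n.
  All coefficients of q but the first are nonpositive and dominated by those of (1 - X)^gamma,
  so 0 <= c_k <= b_k, where b_k = (gamma)_k / k! are the coefficients of (1 - X)^-gamma; by
  log-convexity of Gamma, b_k <= k^(gamma - 1) / Gamma(gamma).  This bounds the terms k < p.
  For k >= p the recurrence for c_k only looks back fewer than p steps, and for the chosen
  beta the weights -ctilde_r (1 - beta)^-r sum to at most 1; hence c_k decays geometrically,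
  c_k <= (1 - beta)^(k - p) b_p, and the tail is a geometric series.  The asymptotic bounds
  then follow from Gamma >= 1 on (0, 1], beta >= (1 - gamma) / (8 p) and comparison of the
  generalised harmonic numbers with integrals.
*)
theory Submission
  imports Defs "HOL-Computational_Algebra.Formal_Power_Series" "Jordan_Normal_Form.Determinant"
begin

section \<open>Lower triangular Toeplitz matrices\<close>

text \<open>Coefficients are written \<open>fps_nth f k\<close>: the notation \<open>f $ k\<close> would clash with
  vector indexing.\<close>
definition lower_toeplitz :: "nat \<Rightarrow> 'a::zero fps \<Rightarrow> 'a mat" where
  "lower_toeplitz n f = mat n n (\<lambda>(i, j). if j \<le> i then fps_nth f (i - j) else 0)"

lemma lower_toeplitz_carrier [simp]: "lower_toeplitz n f \<in> carrier_mat n n"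
  and dim_row_lower_toeplitz [simp]: "dim_row (lower_toeplitz n f) = n"
  and dim_col_lower_toeplitz [simp]: "dim_col (lower_toeplitz n f) = n"
  by (simp_all add: lower_toeplitz_def)

lemma lower_toeplitz_mult:
  fixes f g :: "'a::comm_semiring_1 fps"
  shows "lower_toeplitz n f * lower_toeplitz n g = lower_toeplitz n (f * g)"
proof (rule eq_matI)
  fix i j assume "i < dim_row (lower_toeplitz n (f * g))" "j < dim_col (lower_toeplitz n (f * g))"
  then have i: "i < n" and j: "j < n" by (auto simp: lower_toeplitz_def)
  have interval: "{l\<in>{..<n}. j \<le> l \<and> l \<le> i} = {j..i}"
    using i by auto
  have "(lower_toeplitz n f * lower_toeplitz n g) $$ (i, j)
      = (\<Sum>l<n. if j \<le> l \<and> l \<le> i then fps_nth f (i - l) * fps_nth g (l - j) else 0)"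
    using i j by (auto simp: lower_toeplitz_def scalar_prod_def atLeast0LessThan intro!: sum.cong)
  also have "\<dots> = (\<Sum>l\<in>{j..i}. fps_nth f (i - l) * fps_nth g (l - j))"
    by (subst interval[symmetric], rule sum.inter_filter[symmetric]) simp
  also have "\<dots> = lower_toeplitz n (f * g) $$ (i, j)"
  proof (cases "j \<le> i")
    case True
    have "(\<Sum>l\<in>{j..i}. fps_nth f (i - l) * fps_nth g (l - j))
        = (\<Sum>r=0..i-j. fps_nth f r * fps_nth g (i - j - r))"
      using True by (intro sum.reindex_bij_witness[of _ "\<lambda>r. i - r" "\<lambda>l. i - l"]) auto
    then show ?thesis using True i j by (simp add: lower_toeplitz_def fps_mult_nth)
  qed (use i j in \<open>simp add: lower_toeplitz_def\<close>)
  finally show "(lower_toeplitz n f * lower_toeplitz n g) $$ (i, j) = lower_toeplitz n (f * g) $$ (i, j)" .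
qed (auto simp: lower_toeplitz_def)

lemma lower_toeplitz_1 [simp]: "lower_toeplitz n (1 :: 'a::{zero,one} fps) = 1\<^sub>m n"
  by (rule eq_matI) (auto simp: lower_toeplitz_def)

lemma the_inverse_mat_eqI:
  fixes A B :: "'a::field mat"
  assumes A: "A \<in> carrier_mat n n" and B: "B \<in> carrier_mat n n" and AB: "A * B = 1\<^sub>m n"
  shows "(THE M. M \<in> carrier_mat n n \<and> A * M = 1\<^sub>m n \<and> M * A = 1\<^sub>m n) = B"
proof (rule the_equality)
  show "B \<in> carrier_mat n n \<and> A * B = 1\<^sub>m n \<and> B * A = 1\<^sub>m n"
    using B AB mat_mult_left_right_inverse[OF A B AB] by simp
  fix M assume "M \<in> carrier_mat n n \<and> A * M = 1\<^sub>m n \<and> M * A = 1\<^sub>m n"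
  then have M: "M \<in> carrier_mat n n" and MA: "M * A = 1\<^sub>m n" by auto
  have "M = M * (A * B)" using M AB by simp
  also have "\<dots> = (M * A) * B" using M A B by (simp add: assoc_mult_mat)
  finally show "M = B" using MA B by simp
qed

lemma norm12_lower_toeplitz:
  fixes f :: "real fps"
  assumes "0 < n"
  shows "norm12 (lower_toeplitz n f) = sqrt (\<Sum>k<n. (fps_nth f k)\<^sup>2)"
proof -
  have column: "(\<Sum>i<n. (lower_toeplitz n f $$ (i, j))\<^sup>2) = (\<Sum>k<n - j. (fps_nth f k)\<^sup>2)"
    if "j < n" for j
  proof -
    have "(\<Sum>i<n. (lower_toeplitz n f $$ (i, j))\<^sup>2)
        = (\<Sum>i<n. if j \<le> i then (fps_nth f (i - j))\<^sup>2 else 0)"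
      using that by (intro sum.cong) (auto simp: lower_toeplitz_def)
    also have "\<dots> = (\<Sum>i\<in>{j..<n}. (fps_nth f (i - j))\<^sup>2)"
      by (subst sum.inter_filter[symmetric]) (auto intro!: sum.cong)
    also have "\<dots> = (\<Sum>k<n - j. (fps_nth f k)\<^sup>2)"
      by (intro sum.reindex_bij_witness[of _ "\<lambda>k. k + j" "\<lambda>i. i - j"]) auto
    finally show ?thesis .
  qed
  have columns: "(\<lambda>j. sqrt (\<Sum>i<dim_row (lower_toeplitz n f). (lower_toeplitz n f $$ (i, j))\<^sup>2))
      ` {..<dim_col (lower_toeplitz n f)} = (\<lambda>j. sqrt (\<Sum>k<n - j. (fps_nth f k)\<^sup>2)) ` {..<n}"
    by (simp, rule image_cong) (simp_all add: column)
  show ?thesis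
    unfolding norm12_def columns
    using assms by (intro Max_eqI) (auto intro!: sum_mono2 image_eqI[of _ _ 0])
qed

section \<open>Coefficients of inverse power series\<close>

lemma fps_inverse_nth_recurrence:
  fixes f :: "'a::field fps"
  assumes "fps_nth f 0 = 1" and "0 < k"
  shows "fps_nth (inverse f) k = (\<Sum>r=1..k. - fps_nth f r * fps_nth (inverse f) (k - r))"
  using assms by (cases k) (simp_all add: fps_inverse_def sum_negf)

lemma fps_inverse_nth_nonneg_le:
  fixes f h :: "'a::linordered_field fps"
  assumes "fps_nth f 0 = 1" "fps_nth h 0 = 1"
    and "\<And>r. 0 < r \<Longrightarrow> 0 \<le> - fps_nth f r" "\<And>r. 0 < r \<Longrightarrow> - fps_nth f r \<le> - fps_nth h r"
  shows "0 \<le> fps_nth (inverse f) k \<and> fps_nth (inverse f) k \<le> fps_nth (inverse h) k"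
proof (induction k rule: less_induct)
  case (less k)
  show ?case
  proof (cases "k = 0")
    case False
    then have k: "0 < k" by simp
    have term_bounds: "0 \<le> - fps_nth f r * fps_nth (inverse f) (k - r) \<and>
          - fps_nth f r * fps_nth (inverse f) (k - r) \<le> - fps_nth h r * fps_nth (inverse h) (k - r)"
      if "r \<in> {1..k}" for r
    proof -
      have f: "0 \<le> - fps_nth f r" "- fps_nth f r \<le> - fps_nth h r"
        using that assms(3,4) by auto
      have c: "0 \<le> fps_nth (inverse f) (k - r)" "fps_nth (inverse f) (k - r) \<le> fps_nth (inverse h) (k - r)"
        using that less.IH[of "k - r"] by auto
      have "0 \<le> - fps_nth h r"
        using f by linarith
      then show ?thesis
        using mult_nonneg_nonneg[OF f(1) c(1)] mult_mono[OF f(2) c(2) _ c(1)] by simp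
    qed
    show ?thesis
      unfolding fps_inverse_nth_recurrence[OF assms(1) k]
        fps_inverse_nth_recurrence[OF assms(2) k]
      using term_bounds by (auto intro: sum_nonneg sum_mono)
  qed (use assms in simp)
qed

lemma ctilde_0 [simp]: "ctilde \<gamma> 0 = 1"
  by (simp add: ctilde_def)

lemma ctilde_Suc: "ctilde \<gamma> (Suc r) = ctilde \<gamma> r * (real r - \<gamma>) / (real r + 1)"
  by (simp add: ctilde_def gbinomial_prod_rev prod.atLeast0_lessThan_Suc field_simps)

lemma ctilde_Suc_eq_diff: "ctilde \<gamma> (Suc r) = ctilde (\<gamma> - 1) (Suc r) - ctilde (\<gamma> - 1) r"
  using gbinomial_Suc_Suc[of "\<gamma> - 1" r] by (simp add: ctilde_def algebra_simps)

lemma Suc_times_neg_ctilde_Suc: "real (Suc r) * - ctilde \<gamma> (Suc r) = \<gamma> * ctilde (\<gamma> - 1) r"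
  using arg_cong[OF gbinomial_absorption[of r \<gamma>], of "\<lambda>x. (-1) ^ Suc r * x"]
  by (simp add: ctilde_def algebra_simps)

lemma ctilde_pos: "\<gamma> < 1 \<Longrightarrow> 0 < ctilde (\<gamma> - 1) m"
  by (induction m) (simp_all add: ctilde_Suc)

lemma neg_ctilde_nonneg:
  assumes "0 \<le> \<gamma>" "\<gamma> < 1" "0 < r"
  shows "0 \<le> - ctilde \<gamma> r"
proof -
  obtain m where r: "r = Suc m"
    using assms(3) gr0_implies_Suc by blast
  have "0 \<le> \<gamma> * ctilde (\<gamma> - 1) m"
    using assms ctilde_pos[of \<gamma> m] by simp
  then have "0 \<le> real (Suc m) * - ctilde \<gamma> (Suc m)"
    using Suc_times_neg_ctilde_Suc[of m \<gamma>] by simp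
  then show ?thesis
    using r by (auto simp: zero_le_mult_iff mult_le_0_iff)
qed

lemma sum_neg_ctilde: "(\<Sum>r=1..N. - ctilde \<gamma> r) = 1 - ctilde (\<gamma> - 1) N"
proof -
  have "(\<Sum>r=1..N. - ctilde \<gamma> r) = (\<Sum>m<N. ctilde (\<gamma> - 1) m - ctilde (\<gamma> - 1) (Suc m))"
    by (simp add: sum.atLeast1_atMost_eq[simplified] ctilde_Suc_eq_diff[of \<gamma>])
  then show ?thesis by (simp add: sum_lessThan_telescope')
qed

lemma sum_ctilde_pred:
  assumes "\<gamma> < 1"
  shows "(\<Sum>m<N. ctilde (\<gamma> - 1) m) = real N * ctilde (\<gamma> - 1) N / (1 - \<gamma>)"
proof (induction N)
  case (Suc N)
  have "real (Suc N) * ctilde (\<gamma> - 1) (Suc N) = ctilde (\<gamma> - 1) N * (real N + 1 - \<gamma>)"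
    by (simp add: ctilde_Suc field_simps)
  then show ?case
    using Suc.IH assms by (simp add: field_simps)
qed simp

lemma sum_times_neg_ctilde:
  assumes "\<gamma> < 1"
  shows "(\<Sum>r=1..N. real r * - ctilde \<gamma> r) = \<gamma> * real N * ctilde (\<gamma> - 1) N / (1 - \<gamma>)"
proof -
  have "(\<Sum>r=1..N. real r * - ctilde \<gamma> r) = (\<Sum>m<N. \<gamma> * ctilde (\<gamma> - 1) m)"
    by (rule sum.reindex_bij_witness[of _ Suc "\<lambda>r. r - 1"])
       (auto simp: Suc_times_neg_ctilde_Suc[symmetric] simp del: of_nat_Suc)
  then show ?thesis
    using assms by (simp add: sum_distrib_left[symmetric] sum_ctilde_pred)
qed

text \<open>The series \<open>(1 - X) powr \<gamma>\<close> and \<open>(1 - X) powr -\<gamma>\<close>, and the series whose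
  coefficients form the first column of \<open>Cmat \<gamma> p n\<close>.\<close>
definition ctilde_fps :: "real \<Rightarrow> real fps" where
  "ctilde_fps \<gamma> = Abs_fps (ctilde \<gamma>)"

definition b_fps :: "real \<Rightarrow> real fps" where
  "b_fps \<gamma> = Abs_fps (\<lambda>k. pochhammer \<gamma> k / fact k)"

definition c_fps :: "real \<Rightarrow> nat \<Rightarrow> real fps" where
  "c_fps \<gamma> p = inverse (fps_cutoff p (ctilde_fps \<gamma>))"

lemma ctilde_fps_mult_b_fps: "ctilde_fps \<gamma> * b_fps \<gamma> = 1"
proof (rule fps_ext)
  fix k
  have b_fps_nth: "fps_nth (b_fps \<gamma>) m = (-1) ^ m * ((- \<gamma>) gchoose m)" for m
    by (simp add: b_fps_def gbinomial_pochhammer)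
  have "fps_nth (ctilde_fps \<gamma> * b_fps \<gamma>) k
      = (\<Sum>r=0..k. (-1) ^ k * ((\<gamma> gchoose r) * ((- \<gamma>) gchoose (k - r))))"
  proof (unfold fps_mult_nth, intro sum.cong refl)
    fix r assume "r \<in> {0..k}"
    then have "(-1::real) ^ k = (-1) ^ r * (-1) ^ (k - r)"
      by (simp add: power_add[symmetric])
    then show "fps_nth (ctilde_fps \<gamma>) r * fps_nth (b_fps \<gamma>) (k - r)
             = (-1) ^ k * ((\<gamma> gchoose r) * ((- \<gamma>) gchoose (k - r)))"
      by (simp add: ctilde_fps_def b_fps_nth ctilde_def)
  qed
  also have "\<dots> = (-1) ^ k * ((\<gamma> + - \<gamma>) gchoose k)"
    by (simp add: sum_distrib_left[symmetric] gbinomial_Vandermonde)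
  also have "\<dots> = fps_nth 1 k"
    by (simp add: gbinomial_0_left)
  finally show "fps_nth (ctilde_fps \<gamma> * b_fps \<gamma>) k = fps_nth 1 k" .
qed

lemma b_fps_Suc: "fps_nth (b_fps \<gamma>) (Suc k) = fps_nth (b_fps \<gamma>) k * (\<gamma> + real k) / (real k + 1)"
  by (simp add: b_fps_def pochhammer_Suc field_simps)

lemma b_fps_nth_nonneg: "0 < \<gamma> \<Longrightarrow> 0 \<le> fps_nth (b_fps \<gamma>) k"
  by (simp add: b_fps_def pochhammer_nonneg)

lemma c_fps_nth_0 [simp]: "0 < p \<Longrightarrow> fps_nth (c_fps \<gamma> p) 0 = 1"
  by (simp add: c_fps_def ctilde_fps_def)

lemma c_fps_recurrence:
  assumes "0 < p" "p \<le> k"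
  shows "fps_nth (c_fps \<gamma> p) k = (\<Sum>r=1..p-1. - ctilde \<gamma> r * fps_nth (c_fps \<gamma> p) (k - r))"
proof -
  have "fps_nth (c_fps \<gamma> p) k
      = (\<Sum>r=1..k. - fps_nth (fps_cutoff p (ctilde_fps \<gamma>)) r * fps_nth (c_fps \<gamma> p) (k - r))"
    unfolding c_fps_def using assms by (intro fps_inverse_nth_recurrence) (simp_all add: ctilde_fps_def)
  also have "\<dots> = (\<Sum>r=1..p-1. - fps_nth (fps_cutoff p (ctilde_fps \<gamma>)) r * fps_nth (c_fps \<gamma> p) (k - r))"
    using assms by (intro sum.mono_neutral_right) auto
  also have "\<dots> = (\<Sum>r=1..p-1. - ctilde \<gamma> r * fps_nth (c_fps \<gamma> p) (k - r))"
    by (intro sum.cong) (auto simp: ctilde_fps_def)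
  finally show ?thesis .
qed

lemma c_fps_nonneg_le_b_fps:
  assumes "0 \<le> \<gamma>" "\<gamma> < 1" "0 < p"
  shows "0 \<le> fps_nth (c_fps \<gamma> p) k \<and> fps_nth (c_fps \<gamma> p) k \<le> fps_nth (b_fps \<gamma>) k"
proof -
  have "0 \<le> fps_nth (c_fps \<gamma> p) k \<and> fps_nth (c_fps \<gamma> p) k \<le> fps_nth (inverse (ctilde_fps \<gamma>)) k"
    unfolding c_fps_def
    by (rule fps_inverse_nth_nonneg_le) (use assms neg_ctilde_nonneg in \<open>auto simp: ctilde_fps_def\<close>)
  then show ?thesis
    by (simp add: fps_inverse_unique[OF ctilde_fps_mult_b_fps])
qed

lemma toepT_eq_lower_toeplitz:
  "0 < p \<Longrightarrow> toepT \<gamma> p n = lower_toeplitz n (fps_cutoff p (ctilde_fps \<gamma>))"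
  by (rule eq_matI) (auto simp: toepT_def lower_toeplitz_def ctilde_fps_def)

lemma Cmat_eq_lower_toeplitz:
  assumes "0 < p"
  shows "Cmat \<gamma> p n = lower_toeplitz n (c_fps \<gamma> p)"
proof -
  have "fps_nth (fps_cutoff p (ctilde_fps \<gamma>)) 0 = 1"
    using assms by (simp add: ctilde_fps_def)
  then have "toepT \<gamma> p n * lower_toeplitz n (c_fps \<gamma> p) = 1\<^sub>m n"
    using assms by (simp add: toepT_eq_lower_toeplitz c_fps_def lower_toeplitz_mult inverse_mult_eq_1')
  then show ?thesis
    unfolding Cmat_def by (intro the_inverse_mat_eqI) (simp_all add: toepT_def)
qed

lemma norm12_Cmat_sq:
  assumes "0 < p" "0 < n"
  shows "(norm12 (Cmat \<gamma> p n))\<^sup>2 = (\<Sum>k<n. (fps_nth (c_fps \<gamma> p) k)\<^sup>2)"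
  using assms by (simp add: Cmat_eq_lower_toeplitz norm12_lower_toeplitz sum_nonneg)

section \<open>The first \<open>p\<close> coefficients\<close>

lemma Gamma_ge_1:
  fixes x :: real
  assumes "0 < x" "x \<le> 1"
  shows "1 \<le> Gamma x"
proof -
  define t where "t = (1 - x) / (2 - x)"
  have t: "0 \<le> t" "t < 1"
    using assms by (auto simp: t_def field_simps)
  have "(1 - t) * x + t * 2 = 1"
    using assms unfolding t_def by (simp add: divide_simps)
  then have "ln (Gamma 1) \<le> (1 - t) * ln (Gamma x) + t * ln (Gamma 2)"
    using convex_onD[OF log_convex_Gamma_real, of t x 2] t assms by simp
  moreover have "Gamma (2::real) = 1"
    using Gamma_fact[of 1, where 'a=real] by simp
  ultimately have "0 \<le> (1 - t) * ln (Gamma x)"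
    by simp
  then have "0 \<le> ln (Gamma x)"
    using t by (simp add: zero_le_mult_iff)
  then show ?thesis
    using Gamma_real_pos[OF assms(1)] by simp
qed

lemma b_fps_nth_le:
  assumes "0 < \<gamma>" "\<gamma> \<le> 1" "0 < k"
  shows "fps_nth (b_fps \<gamma>) k \<le> real k powr (\<gamma> - 1) / Gamma \<gamma>"
proof -
  have k: "0 < real k" using assms by simp
  have Gamma_k: "Gamma (real k) = fact k / real k"
    using Gamma_fact[of "k - 1", where 'a=real] assms by (cases k) (simp_all add: field_simps)
  have Gamma_Suc_k: "Gamma (real k + 1) = fact k"
    using Gamma_fact[of k, where 'a=real] by (simp add: add.commute)
  have "(1 - \<gamma>) * real k + \<gamma> * (real k + 1) = \<gamma> + real k"
    by (simp add: algebra_simps)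
  then have "ln (Gamma (\<gamma> + real k))
      \<le> (1 - \<gamma>) * ln (Gamma (real k)) + \<gamma> * ln (Gamma (real k + 1))"
    using convex_onD[OF log_convex_Gamma_real, of \<gamma> "real k" "real k + 1"] assms k by simp
  also have "\<dots> = (1 - \<gamma>) * (ln (fact k) - ln (real k)) + \<gamma> * ln (fact k)"
    using k by (simp add: Gamma_k Gamma_Suc_k ln_div)
  also have "\<dots> = ln (fact k * real k powr (\<gamma> - 1))"
    using k by (simp add: ln_mult ln_powr algebra_simps)
  finally have "Gamma (\<gamma> + real k) \<le> fact k * real k powr (\<gamma> - 1)"
    using Gamma_real_pos[of "\<gamma> + real k"] assms k by simp
  then have "Gamma (\<gamma> + real k) / Gamma \<gamma> / fact k \<le> real k powr (\<gamma> - 1) / Gamma \<gamma>"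
    using Gamma_real_pos[OF assms(1)] by (simp add: field_simps)
  moreover have "\<gamma> \<notin> \<int>\<^sub>\<le>\<^sub>0"
    using assms by (auto elim!: nonpos_Ints_cases)
  ultimately show ?thesis
    by (simp add: b_fps_def pochhammer_Gamma)
qed

lemma b_fps_nth_sq_le:
  assumes "0 < \<gamma>" "\<gamma> \<le> 1" "0 < k"
  shows "(fps_nth (b_fps \<gamma>) k)\<^sup>2 \<le> 1 / ((Gamma \<gamma>)\<^sup>2 * real k powr (2 - 2 * \<gamma>))"
proof -
  have "0 \<le> fps_nth (b_fps \<gamma>) k"
    using assms by (simp add: b_fps_nth_nonneg)
  then have "(fps_nth (b_fps \<gamma>) k)\<^sup>2 \<le> (real k powr (\<gamma> - 1) / Gamma \<gamma>)\<^sup>2"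
    using b_fps_nth_le[OF assms] by (intro power_mono)
  also have "\<dots> = 1 / ((Gamma \<gamma>)\<^sup>2 * real k powr (2 - 2 * \<gamma>))"
    using powr_minus_divide[of "real k" "2 - 2 * \<gamma>"]
    by (simp add: power_divide power2_eq_square powr_add[symmetric])
  finally show ?thesis .
qed

lemma sum_c_fps_sq_head:
  assumes "0 < \<gamma>" "\<gamma> < 1" "0 < p"
  shows "(\<Sum>k<p. (fps_nth (c_fps \<gamma> p) k)\<^sup>2) \<le> 1 + genHarm (p - 1) (2 - 2 * \<gamma>) / (Gamma \<gamma>)\<^sup>2"
proof -
  have "{..<p} = insert 0 {1..p-1}"
    using assms by auto
  then have "(\<Sum>k<p. (fps_nth (c_fps \<gamma> p) k)\<^sup>2) = 1 + (\<Sum>k=1..p-1. (fps_nth (c_fps \<gamma> p) k)\<^sup>2)"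
    using assms by simp
  also have "\<dots> \<le> 1 + (\<Sum>k=1..p-1. 1 / ((Gamma \<gamma>)\<^sup>2 * real k powr (2 - 2 * \<gamma>)))"
  proof (intro add_left_mono sum_mono)
    fix k assume "k \<in> {1..p-1}"
    then have "(fps_nth (c_fps \<gamma> p) k)\<^sup>2 \<le> (fps_nth (b_fps \<gamma>) k)\<^sup>2"
      using c_fps_nonneg_le_b_fps[of \<gamma> p k] assms by (intro power_mono) auto
    also have "\<dots> \<le> 1 / ((Gamma \<gamma>)\<^sup>2 * real k powr (2 - 2 * \<gamma>))"
      using \<open>k \<in> {1..p-1}\<close> assms by (intro b_fps_nth_sq_le) auto
    finally show "(fps_nth (c_fps \<gamma> p) k)\<^sup>2 \<le> 1 / ((Gamma \<gamma>)\<^sup>2 * real k powr (2 - 2 * \<gamma>))" .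
  qed
  also have "\<dots> = 1 + genHarm (p - 1) (2 - 2 * \<gamma>) / (Gamma \<gamma>)\<^sup>2"
    by (simp add: genHarm_def sum_divide_distrib mult.commute)
  finally show ?thesis .
qed

section \<open>Geometric decay of the remaining coefficients\<close>

lemma inverse_one_minus_power_le:
  fixes \<beta> :: real
  assumes "0 \<le> \<beta>" "real r * \<beta> \<le> 1/2"
  shows "1 / (1 - \<beta>) ^ r \<le> 1 + 2 * real r * \<beta>"
proof (cases "r = 0")
  case False
  define x where "x = real r * \<beta>"
  have x: "0 \<le> x" "x \<le> 1/2"
    using assms by (simp_all add: x_def)
  have "\<beta> \<le> real r * \<beta>"
    using False assms(1) mult_right_mono[of 1 "real r" \<beta>] by simp
  then have "\<beta> \<le> 1"
    using assms(2) by simp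
  then have "1 - x \<le> (1 - \<beta>) ^ r"
    using Bernoulli_inequality[of "- \<beta>" r] by (simp add: x_def)
  then have "1 / (1 - \<beta>) ^ r \<le> 1 / (1 - x)"
    using x by (intro divide_left_mono) auto
  also have "\<dots> \<le> 1 + 2 * x"
  proof -
    have "1 \<le> (1 + 2 * x) * (1 - x)"
      using mult_nonneg_nonneg[of x "1 - 2 * x"] x by (simp add: algebra_simps)
    then show ?thesis
      using x by (simp add: divide_simps)
  qed
  finally show ?thesis
    by (simp add: x_def mult.assoc)
qed simp

context
  fixes \<gamma> :: real and p :: nat
  assumes \<gamma>: "0 < \<gamma>" "\<gamma> < 1" and p: "2 \<le> p"
begin

lemma betaC_pos: "0 < betaC \<gamma> p"
proof -
  have "1 < 2 * real p / (real p + 1)"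
    using p by (simp add: field_simps)
  then show ?thesis
    using \<gamma> p unfolding betaC_def by (auto intro!: mult_pos_pos divide_pos_pos)
qed

lemma betaC_le: "betaC \<gamma> p \<le> (1 - \<gamma>) / (8 * (real p - 1))"
proof -
  have p1: "0 < real p - 1"
    using p by simp
  have "real p - 1 = (real p - 1) powr \<gamma> * (real p - 1) powr (1 - \<gamma>)"
    using p1 by (simp add: powr_add[symmetric])
  also have "\<dots> \<le> real p powr \<gamma> * (real p - 1) powr (1 - \<gamma>)"
    using p1 \<gamma> by (intro mult_right_mono powr_mono2) auto
  finally have "(1 - \<gamma>) / (8 * real p powr \<gamma> * (real p - 1) powr (1 - \<gamma>)) \<le> (1 - \<gamma>) / (8 * (real p - 1))"
    using p1 \<gamma> by (intro divide_left_mono) (auto simp: mult.assoc)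
  then show ?thesis
    unfolding betaC_def by linarith
qed

lemma betaC_ge: "(1 - \<gamma>) / (8 * real p) \<le> betaC \<gamma> p"
proof -
  have p1: "1 < real p"
    using p by simp
  have "ln ((real p + 1) / (2 * real p)) \<le> (real p + 1) / (2 * real p) - 1"
    using p1 by (intro ln_le_minus_one) simp
  also have "\<dots> \<le> - 1/4"
    using p by (simp add: field_simps)
  finally have "1/4 \<le> ln (2 * real p / (real p + 1))"
    using p1 by (simp add: ln_div)
  then have "(1 - \<gamma>) / (2 * real p) * (1/4) \<le> (1 - \<gamma>) / (2 * real p) * ln (2 * real p / (real p + 1))"
    using \<gamma> p1 by (intro mult_left_mono) auto
  moreover have "real p powr \<gamma> * (real p - 1) powr (1 - \<gamma>) \<le> real p powr \<gamma> * real p powr (1 - \<gamma>)"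
    using p1 \<gamma> by (intro mult_left_mono powr_mono2) auto
  then have "(1 - \<gamma>) / (8 * real p) \<le> (1 - \<gamma>) / (8 * real p powr \<gamma> * (real p - 1) powr (1 - \<gamma>))"
    using p1 \<gamma> by (intro divide_left_mono) (auto simp: mult.assoc powr_add[symmetric])
  ultimately show ?thesis
    unfolding betaC_def by simp
qed

lemma betaC_le_half: "betaC \<gamma> p \<le> (1 - \<gamma>) / (2 * real p)"
proof -
  have "(1 - \<gamma>) / (8 * (real p - 1)) \<le> (1 - \<gamma>) / (2 * real p)"
    using p \<gamma> by (intro divide_left_mono) auto
  then show ?thesis
    using betaC_le by linarith
qed

lemma betaC_lt_1: "betaC \<gamma> p < 1"
proof -
  have "(1 - \<gamma>) / (2 * real p) < 1"
    using p \<gamma> by (simp add: field_simps)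
  then show ?thesis
    using betaC_le_half by linarith
qed

lemma sum_neg_ctilde_div_power_le_1: "(\<Sum>r=1..p-1. - ctilde \<gamma> r / (1 - betaC \<gamma> p) ^ r) \<le> 1"
proof -
  define \<beta> where "\<beta> = betaC \<gamma> p"
  define N where "N = p - 1"
  define a where "a r = - ctilde \<gamma> r" for r
  have N: "real N = real p - 1" "0 < real N"
    using p by (auto simp: N_def of_nat_diff)
  then have "\<beta> * (8 * real N) \<le> 1 - \<gamma>"
    using betaC_le by (simp add: \<beta>_def pos_le_divide_eq)
  then have \<beta>N: "\<beta> * real N \<le> (1 - \<gamma>) / 8"
    by simp
  have \<beta>: "0 \<le> \<beta>"
    using betaC_pos by (simp add: \<beta>_def)
  have "(\<Sum>r=1..N. a r / (1 - \<beta>) ^ r) \<le> (\<Sum>r=1..N. a r * (1 + 2 * real r * \<beta>))"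
  proof (intro sum_mono)
    fix r assume r: "r \<in> {1..N}"
    have "real r * \<beta> \<le> real N * \<beta>"
      using r \<beta> by (intro mult_right_mono) auto
    then have "1 / (1 - \<beta>) ^ r \<le> 1 + 2 * real r * \<beta>"
      using \<beta>N \<gamma> \<beta> by (intro inverse_one_minus_power_le) (auto simp: mult.commute)
    moreover have "0 \<le> a r"
      using neg_ctilde_nonneg[of \<gamma> r] r \<gamma> by (simp add: a_def)
    ultimately show "a r / (1 - \<beta>) ^ r \<le> a r * (1 + 2 * real r * \<beta>)"
      using mult_left_mono by fastforce
  qed
  also have "\<dots> = (\<Sum>r=1..N. a r) + 2 * \<beta> * (\<Sum>r=1..N. real r * a r)"
    by (simp add: distrib_left sum.distrib sum_distrib_left mult_ac)
  also have "\<dots> = 1 - (1 - 2 * \<beta> * \<gamma> * real N / (1 - \<gamma>)) * ctilde (\<gamma> - 1) N"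
    unfolding a_def sum_neg_ctilde sum_times_neg_ctilde[OF \<gamma>(2)] using \<gamma> by (simp add: field_simps)
  also have "\<dots> \<le> 1"
  proof -
    have "2 * \<beta> * \<gamma> * real N \<le> 2 * \<gamma> * ((1 - \<gamma>) / 8)"
      using mult_left_mono[OF \<beta>N, of "2 * \<gamma>"] \<gamma> by (simp add: mult_ac)
    also have "\<dots> \<le> 1 - \<gamma>"
      using \<gamma> mult_right_mono[of \<gamma> 4 "1 - \<gamma>"] by simp
    finally have "0 \<le> 1 - 2 * \<beta> * \<gamma> * real N / (1 - \<gamma>)"
      using \<gamma> by (simp add: field_simps)
    then show ?thesis
      using ctilde_pos[OF \<gamma>(2), of N] by simp
  qed
  finally show ?thesis
    by (simp add: a_def \<beta>_def N_def)
qed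

lemma b_fps_nth_add_le: "m \<le> p \<Longrightarrow> fps_nth (b_fps \<gamma>) (p + m) \<le> (1 - betaC \<gamma> p) ^ m * fps_nth (b_fps \<gamma>) p"
proof (induction m)
  case (Suc m)
  have "(\<gamma> + real (p + m)) / (real (p + m) + 1) = 1 - (1 - \<gamma>) / (real (p + m) + 1)"
    by (simp add: field_simps)
  also have "\<dots> \<le> 1 - (1 - \<gamma>) / (2 * real p)"
    using Suc.prems \<gamma> p by (intro diff_left_mono divide_left_mono) auto
  also have "\<dots> \<le> 1 - betaC \<gamma> p"
    using betaC_le_half by simp
  finally have ratio: "(\<gamma> + real (p + m)) / (real (p + m) + 1) \<le> 1 - betaC \<gamma> p" .
  have "fps_nth (b_fps \<gamma>) (p + Suc m) = fps_nth (b_fps \<gamma>) (p + m) * ((\<gamma> + real (p + m)) / (real (p + m) + 1))"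
    by (simp add: b_fps_Suc)
  also have "\<dots> \<le> ((1 - betaC \<gamma> p) ^ m * fps_nth (b_fps \<gamma>) p) * (1 - betaC \<gamma> p)"
    using Suc ratio \<gamma> betaC_lt_1 b_fps_nth_nonneg[of \<gamma>]
    by (intro mult_mono) (auto simp: b_fps_nth_nonneg)
  finally show ?case
    by (simp add: mult_ac)
qed simp

text \<open>For \<open>k \<le> 2p\<close> this is the decay of \<open>b\<close>; beyond, the recurrence only reaches back
  into the range \<open>[p, k)\<close>, and the weighted sum of its coefficients is at most one.\<close>
lemma c_fps_nth_le: "p \<le> k \<Longrightarrow> fps_nth (c_fps \<gamma> p) k \<le> (1 - betaC \<gamma> p) ^ (k - p) * fps_nth (b_fps \<gamma>) p"
proof (induction k rule: less_induct)
  case (less k)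
  define l where "l = 1 - betaC \<gamma> p"
  have l: "0 < l" "l \<le> 1"
    using betaC_pos betaC_lt_1 by (auto simp: l_def)
  show ?case
  proof (cases "k \<le> 2 * p")
    case True
    have "fps_nth (c_fps \<gamma> p) k \<le> fps_nth (b_fps \<gamma>) (p + (k - p))"
      using c_fps_nonneg_le_b_fps[of \<gamma> p k] \<gamma> p less.prems by simp
    also have "\<dots> \<le> (1 - betaC \<gamma> p) ^ (k - p) * fps_nth (b_fps \<gamma>) p"
      using True by (intro b_fps_nth_add_le) auto
    finally show ?thesis .
  next
    case False
    have "fps_nth (c_fps \<gamma> p) k = (\<Sum>r=1..p-1. - ctilde \<gamma> r * fps_nth (c_fps \<gamma> p) (k - r))"
      using p less.prems by (intro c_fps_recurrence) auto
    also have "\<dots> \<le> (\<Sum>r=1..p-1. - ctilde \<gamma> r * (l ^ (k - p) * fps_nth (b_fps \<gamma>) p / l ^ r))"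
    proof (intro sum_mono mult_left_mono)
      fix r assume r: "r \<in> {1..p-1}"
      have "fps_nth (c_fps \<gamma> p) (k - r) \<le> l ^ (k - r - p) * fps_nth (b_fps \<gamma>) p"
        using r False less.IH[of "k - r"] by (auto simp: l_def)
      also have "\<dots> = l ^ (k - p) * fps_nth (b_fps \<gamma>) p / l ^ r"
      proof -
        have "k - p = (k - r - p) + r"
          using r False by auto
        then show ?thesis
          using l by (simp add: power_add)
      qed
      finally show "fps_nth (c_fps \<gamma> p) (k - r) \<le> l ^ (k - p) * fps_nth (b_fps \<gamma>) p / l ^ r" .
      show "0 \<le> - ctilde \<gamma> r"
        using r \<gamma> by (intro neg_ctilde_nonneg) auto
    qed
    also have "\<dots> = l ^ (k - p) * fps_nth (b_fps \<gamma>) p * (\<Sum>r=1..p-1. - ctilde \<gamma> r / l ^ r)"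
      by (simp add: sum_distrib_left mult_ac)
    also have "\<dots> \<le> l ^ (k - p) * fps_nth (b_fps \<gamma>) p"
      using sum_neg_ctilde_div_power_le_1 l \<gamma> b_fps_nth_nonneg[of \<gamma> p]
      by (intro mult_left_le) (auto simp: l_def)
    finally show ?thesis
      by (simp add: l_def)
  qed
qed

lemma sum_c_fps_sq_tail:
  "(\<Sum>k\<in>{p..<n}. (fps_nth (c_fps \<gamma> p) k)\<^sup>2)
     \<le> 1 / ((Gamma \<gamma>)\<^sup>2 * real p powr (2 - 2 * \<gamma>)) * (1 / (betaC \<gamma> p * (2 - betaC \<gamma> p)))"
proof -
  define l where "l = (1 - betaC \<gamma> p)\<^sup>2"
  have l: "0 \<le> l" "l < 1"
    using betaC_pos betaC_lt_1 by (auto simp: l_def power_less_one_iff)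
  have "(\<Sum>k\<in>{p..<n}. (fps_nth (c_fps \<gamma> p) k)\<^sup>2) \<le> (\<Sum>k\<in>{p..<n}. ((1 - betaC \<gamma> p) ^ (k - p) * fps_nth (b_fps \<gamma>) p)\<^sup>2)"
    using c_fps_nth_le c_fps_nonneg_le_b_fps \<gamma> p by (intro sum_mono power_mono) auto
  also have "\<dots> = (\<Sum>j<n-p. ((1 - betaC \<gamma> p) ^ j * fps_nth (b_fps \<gamma>) p)\<^sup>2)"
    by (intro sum.reindex_bij_witness[of _ "\<lambda>j. j + p" "\<lambda>k. k - p"]) auto
  also have "\<dots> = (\<Sum>j<n-p. l ^ j) * (fps_nth (b_fps \<gamma>) p)\<^sup>2"
    by (simp add: l_def sum_distrib_left power_mult_distrib power_mult[symmetric] mult.commute)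
  also have "\<dots> \<le> 1 / (1 - l) * (1 / ((Gamma \<gamma>)\<^sup>2 * real p powr (2 - 2 * \<gamma>)))"
  proof (intro mult_mono)
    show "(\<Sum>j<n-p. l ^ j) \<le> 1 / (1 - l)"
      using l by (simp add: sum_gp_strict divide_right_mono)
    show "(fps_nth (b_fps \<gamma>) p)\<^sup>2 \<le> 1 / ((Gamma \<gamma>)\<^sup>2 * real p powr (2 - 2 * \<gamma>))"
      using \<gamma> p by (intro b_fps_nth_sq_le) auto
  qed (use l in auto)
  also have "1 - l = betaC \<gamma> p * (2 - betaC \<gamma> p)"
    by (simp add: l_def power2_eq_square algebra_simps)
  finally show ?thesis
    by (simp add: mult.commute)
qed

end

lemma norm12_Cmat_sq_le:
  assumes "0 < \<gamma>" "\<gamma> < 1" "2 \<le> p" "p \<le> n"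
  shows "(norm12 (Cmat \<gamma> p n))\<^sup>2 \<le>
           1 + genHarm (p - 1) (2 - 2 * \<gamma>) / (Gamma \<gamma>)\<^sup>2
             + 1 / ((Gamma \<gamma>)\<^sup>2 * real p powr (2 - 2 * \<gamma>)) * (1 / (betaC \<gamma> p * (2 - betaC \<gamma> p)))"
proof -
  have "(\<Sum>k<n. (fps_nth (c_fps \<gamma> p) k)\<^sup>2)
      = (\<Sum>k<p. (fps_nth (c_fps \<gamma> p) k)\<^sup>2) + (\<Sum>k\<in>{p..<n}. (fps_nth (c_fps \<gamma> p) k)\<^sup>2)"
    using assms by (simp add: atLeast0LessThan[symmetric] sum.atLeastLessThan_concat)
  then have "(norm12 (Cmat \<gamma> p n))\<^sup>2
      = (\<Sum>k<p. (fps_nth (c_fps \<gamma> p) k)\<^sup>2) + (\<Sum>k\<in>{p..<n}. (fps_nth (c_fps \<gamma> p) k)\<^sup>2)"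
    using assms by (simp add: norm12_Cmat_sq)
  then show ?thesis
    using sum_c_fps_sq_head[of \<gamma> p] sum_c_fps_sq_tail[of \<gamma> p n] assms by simp
qed

section \<open>Asymptotic bounds\<close>

lemma tail_term_le_powr:
  assumes "0 < \<gamma>" "\<gamma> < 1" "2 \<le> p"
  shows "1 / ((Gamma \<gamma>)\<^sup>2 * real p powr (2 - 2 * \<gamma>)) * (1 / (betaC \<gamma> p * (2 - betaC \<gamma> p)))
           \<le> 8 * real p powr (2 * \<gamma> - 1) / (1 - \<gamma>)"
proof -
  define \<beta> where "\<beta> = betaC \<gamma> p"
  have \<beta>: "(1 - \<gamma>) / (8 * real p) \<le> \<beta>" "0 < \<beta>" "\<beta> < 1"
    using assms betaC_ge betaC_pos betaC_lt_1 by (simp_all add: \<beta>_def)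
  then have "\<beta> \<le> \<beta> * (2 - \<beta>)"
    using mult_left_mono[of 1 "2 - \<beta>" \<beta>] by simp
  then have lower: "0 < (1 - \<gamma>) / (8 * real p)" "(1 - \<gamma>) / (8 * real p) \<le> \<beta> * (2 - \<beta>)"
    using assms \<beta>(1) by auto
  have "1 / (\<beta> * (2 - \<beta>)) \<le> 8 * real p / (1 - \<gamma>)"
    using divide_left_mono[OF lower(2), of 1] mult_pos_pos[OF _ lower(1), of "\<beta> * (2 - \<beta>)"] lower
    by simp
  moreover have "1 / ((Gamma \<gamma>)\<^sup>2 * real p powr (2 - 2 * \<gamma>)) \<le> real p powr (2 * \<gamma> - 2)"
  proof -
    have "1 \<le> (Gamma \<gamma>)\<^sup>2"
      using Gamma_ge_1[of \<gamma>] assms by (simp add: one_le_power)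
    then have "1 / ((Gamma \<gamma>)\<^sup>2 * real p powr (2 - 2 * \<gamma>)) \<le> 1 / real p powr (2 - 2 * \<gamma>)"
      using assms by (intro divide_left_mono) (auto intro!: mult_pos_pos)
    also have "\<dots> = real p powr (2 * \<gamma> - 2)"
      using powr_minus_divide[of "real p" "2 - 2 * \<gamma>"] by simp
    finally show ?thesis .
  qed
  ultimately have "1 / ((Gamma \<gamma>)\<^sup>2 * real p powr (2 - 2 * \<gamma>)) * (1 / (\<beta> * (2 - \<beta>)))
      \<le> real p powr (2 * \<gamma> - 2) * (8 * real p / (1 - \<gamma>))"
    using lower by (intro mult_mono) auto
  also have "\<dots> = 8 * real p powr (2 * \<gamma> - 1) / (1 - \<gamma>)"
    using assms powr_add[of "real p" "2 * \<gamma> - 2" 1] by simp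
  finally show ?thesis
    by (simp add: \<beta>_def)
qed

lemma norm12_Cmat_sq_le_powr:
  assumes "0 < \<gamma>" "\<gamma> < 1" "2 \<le> p" "p \<le> n"
  shows "(norm12 (Cmat \<gamma> p n))\<^sup>2 \<le> 1 + genHarm (p - 1) (2 - 2 * \<gamma>) + 8 * real p powr (2 * \<gamma> - 1) / (1 - \<gamma>)"
proof -
  have "genHarm (p - 1) (2 - 2 * \<gamma>) / (Gamma \<gamma>)\<^sup>2 \<le> genHarm (p - 1) (2 - 2 * \<gamma>) / 1"
    using Gamma_ge_1[of \<gamma>] assms
    by (intro divide_left_mono) (auto simp: genHarm_def sum_nonneg one_le_power)
  then show ?thesis
    using norm12_Cmat_sq_le[OF assms] tail_term_le_powr[of \<gamma> p] assms by simp
qed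

lemma powr_le_powr_diff_div:
  fixes x s :: real
  assumes "0 \<le> s" "s \<noteq> 1" "1 < x"
  shows "x powr (- s) \<le> (x powr (1 - s) - (x - 1) powr (1 - s)) / (1 - s)"
proof -
  have "((\<lambda>t. t powr (1 - s)) has_real_derivative (1 - s) * t powr (1 - s - 1)) (at t)"
    if "x - 1 \<le> t" for t
    using that assms by (intro has_real_derivative_powr) auto
  then obtain z where z: "x - 1 < z" "z < x"
    and mvt: "x powr (1 - s) - (x - 1) powr (1 - s) = (x - (x - 1)) * ((1 - s) * z powr (1 - s - 1))"
    using MVT2[of "x - 1" x "\<lambda>t. t powr (1 - s)" "\<lambda>t. (1 - s) * t powr (1 - s - 1)"] by auto
  have "x powr (- s) \<le> z powr (- s)"
    using z assms by (intro powr_mono2') auto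
  also have "\<dots> = (x powr (1 - s) - (x - 1) powr (1 - s)) / (1 - s)"
    using mvt assms by simp
  finally show ?thesis .
qed

lemma genHarm_Suc: "genHarm (Suc N) s = genHarm N s + real (Suc N) powr (- s)"
  by (simp add: genHarm_def powr_minus_divide)

lemma genHarm_le_powr:
  assumes "0 \<le> s" "s \<noteq> 1" "1 \<le> N"
  shows "genHarm N s \<le> 1 + (real N powr (1 - s) - 1) / (1 - s)"
  using assms(3)
proof (induction N rule: dec_induct)
  case base
  then show ?case by (simp add: genHarm_def)
next
  case (step N)
  have "genHarm (Suc N) s \<le> 1 + (real N powr (1 - s) - 1) / (1 - s)
                + (real (Suc N) powr (1 - s) - real N powr (1 - s)) / (1 - s)"
    using step powr_le_powr_diff_div[of s "real (Suc N)"] assms by (simp add: genHarm_Suc)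
  also have "\<dots> = 1 + (real (Suc N) powr (1 - s) - 1) / (1 - s)"
    by (simp add: diff_divide_distrib)
  finally show ?case .
qed

lemma genHarm_1_le_ln:
  assumes "1 \<le> N"
  shows "genHarm N 1 \<le> 1 + ln (real N)"
  using assms
proof (induction N rule: dec_induct)
  case base
  then show ?case by (simp add: genHarm_def)
next
  case (step N)
  have "ln (real N / real (Suc N)) \<le> real N / real (Suc N) - 1"
    using step by (intro ln_le_minus_one) simp
  then have "1 / real (Suc N) \<le> ln (real (Suc N)) - ln (real N)"
    using step by (simp add: ln_div field_simps)
  then show ?case
    using step by (simp add: genHarm_Suc powr_minus_divide)
qed

lemma le_times_sqrt_if_sq_le:
  fixes x y c :: real
  assumes "x\<^sup>2 \<le> c\<^sup>2 * y" "0 \<le> c"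
  shows "x \<le> c * sqrt y"
  using real_le_rsqrt[OF assms(1)] assms(2) by (simp add: real_sqrt_mult)

lemma norm12_Cmat_le_below_half:
  assumes "0 < \<gamma>" "\<gamma> < 1/2" "2 \<le> p" "p \<le> n"
  shows "norm12 (Cmat \<gamma> p n) \<le> 10 / sqrt (1/2 - \<gamma>)"
proof -
  define u where "u = 1 / (1/2 - \<gamma>)"
  have u: "2 \<le> u" "1 / (1 - 2 * \<gamma>) = u / 2"
    using assms by (auto simp: u_def field_simps)
  have "genHarm (p - 1) (2 - 2 * \<gamma>) \<le> 1 + (real (p - 1) powr (2 * \<gamma> - 1) - 1) / (2 * \<gamma> - 1)"
    using genHarm_le_powr[of "2 - 2 * \<gamma>" "p - 1"] assms by simp
  also have "\<dots> = 1 + (1 - real (p - 1) powr (2 * \<gamma> - 1)) / (1 - 2 * \<gamma>)"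
    using assms by (simp add: field_simps)
  also have "\<dots> \<le> 1 + 1 / (1 - 2 * \<gamma>)"
    using assms by (intro add_left_mono divide_right_mono) auto
  finally have harm: "genHarm (p - 1) (2 - 2 * \<gamma>) \<le> 1 + u / 2"
    using u by simp
  have "real p powr (2 * \<gamma> - 1) \<le> real p powr 0"
    using assms by (intro powr_mono) auto
  then have "real p powr (2 * \<gamma> - 1) \<le> 1"
    using assms by simp
  then have "8 * real p powr (2 * \<gamma> - 1) / (1 - \<gamma>) \<le> 8 / (1 / 2)"
    using assms by (intro frac_le) auto
  then have "(norm12 (Cmat \<gamma> p n))\<^sup>2 \<le> 10\<^sup>2 * u"
    using norm12_Cmat_sq_le_powr[of \<gamma> p n] assms harm u by simp
  then show ?thesis
    using le_times_sqrt_if_sq_le[of _ 10 u] by (simp add: u_def real_sqrt_divide)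
qed

lemma norm12_Cmat_le_half:
  assumes "2 \<le> p" "p \<le> n"
  shows "norm12 (Cmat (1/2) p n) \<le> 10 * sqrt (ln (real p))"
proof -
  have "ln (1 / real p) \<le> 1 / real p - 1"
    using assms by (intro ln_le_minus_one) auto
  moreover have "ln (1 / real p) = - ln (real p)" "1 / real p \<le> 1/2"
    using assms by (simp_all add: ln_div)
  ultimately have ln_p: "1/2 \<le> ln (real p)"
    by linarith
  have "genHarm (p - 1) 1 \<le> 1 + ln (real (p - 1))"
    using assms by (intro genHarm_1_le_ln) auto
  also have "\<dots> \<le> 1 + ln (real p)"
    using assms by simp
  finally have "(norm12 (Cmat (1/2) p n))\<^sup>2 \<le> 10\<^sup>2 * ln (real p)"
    using norm12_Cmat_sq_le_powr[of "1/2" p n] assms ln_p by simp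
  then show ?thesis
    by (rule le_times_sqrt_if_sq_le) simp
qed

lemma norm12_Cmat_le_above_half:
  assumes "1/2 < \<gamma>" "\<gamma> < 1" "2 \<le> p" "p \<le> n"
  shows "norm12 (Cmat \<gamma> p n) \<le> 10 * real p powr (\<gamma> - 1/2) / sqrt ((1 - \<gamma>) * (\<gamma> - 1/2))"
proof -
  define P where "P = real p powr (2 * \<gamma> - 1)"
  define D where "D = (1 - \<gamma>) * (\<gamma> - 1/2)"
  have "D \<le> 1 * (\<gamma> - 1/2)" "D \<le> (1 - \<gamma>) * 1"
    unfolding D_def using assms by (intro mult_right_mono mult_left_mono; simp)+
  then have "D \<le> 1 - \<gamma>" "D \<le> 2 * \<gamma> - 1" "D \<le> 1"
    using assms by simp_all
  moreover have "0 < D"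
    using assms by (simp add: D_def)
  ultimately have D: "0 < D" "D \<le> 1 - \<gamma>" "D \<le> 2 * \<gamma> - 1" "D \<le> 1"
    by simp_all
  have P: "1 \<le> P"
    using assms by (simp add: P_def ge_one_powr_ge_zero)
  define Q where "Q = P / D"
  have Q: "1 \<le> Q"
    using P D by (simp add: Q_def le_divide_eq)
  have "genHarm (p - 1) (2 - 2 * \<gamma>) \<le> 1 + (real (p - 1) powr (2 * \<gamma> - 1) - 1) / (2 * \<gamma> - 1)"
    using genHarm_le_powr[of "2 - 2 * \<gamma>" "p - 1"] assms by simp
  also have "\<dots> \<le> real (p - 1) powr (2 * \<gamma> - 1) / (2 * \<gamma> - 1)"
    using assms by (simp add: diff_divide_distrib)
  also have "\<dots> \<le> Q"
    unfolding Q_def P_def using assms D by (intro frac_le powr_mono2) auto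
  finally have harm: "genHarm (p - 1) (2 - 2 * \<gamma>) \<le> Q" .
  have "8 * P / (1 - \<gamma>) \<le> 8 * P / D"
    using P D by (intro divide_left_mono) auto
  moreover have "(norm12 (Cmat \<gamma> p n))\<^sup>2 \<le> 1 + genHarm (p - 1) (2 - 2 * \<gamma>) + 8 * P / (1 - \<gamma>)"
    using norm12_Cmat_sq_le_powr[of \<gamma> p n] assms by (simp add: P_def)
  ultimately have "(norm12 (Cmat \<gamma> p n))\<^sup>2 \<le> 10\<^sup>2 * Q"
    using harm Q by (simp add: Q_def)
  then have "norm12 (Cmat \<gamma> p n) \<le> 10 * sqrt Q"
    by (rule le_times_sqrt_if_sq_le) simp
  also have "\<dots> = 10 * real p powr (\<gamma> - 1/2) / sqrt ((1 - \<gamma>) * (\<gamma> - 1/2))"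
    by (simp add: Q_def P_def D_def real_sqrt_divide powr_half_sqrt[symmetric] powr_powr diff_divide_distrib)
  finally show ?thesis .
qed

lemma norm12_Cmat_le:
  assumes "0 < \<gamma>" "\<gamma> < 1" "2 \<le> p" "p \<le> n"
  shows "norm12 (Cmat \<gamma> p n) \<le>
           (if \<gamma> < 1/2 then 10 / sqrt (1/2 - \<gamma>)
            else if \<gamma> = 1/2 then 10 * sqrt (ln (real p))
            else 10 * real p powr (\<gamma> - 1/2) / sqrt ((1 - \<gamma>) * (\<gamma> - 1/2)))"
proof -
  consider "\<gamma> < 1/2" | "\<gamma> = 1/2" | "1/2 < \<gamma>"
    by linarith
  then show ?thesis
  proof cases
    case 1
    then show ?thesis using norm12_Cmat_le_below_half assms by simp
  next
    case 2
    show ?thesis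
      unfolding 2 using norm12_Cmat_le_half assms by simp
  next
    case 3
    then show ?thesis using norm12_Cmat_le_above_half assms by simp
  qed
qed

theorem mainTheorem8:
  shows "(\<forall>(\<gamma>::real) (n::nat) (p::nat). 0 < \<gamma> \<and> \<gamma> < 1 \<and> 2 \<le> p \<and> p \<le> n \<longrightarrow>
            (norm12 (Cmat \<gamma> p n))\<^sup>2 \<le>
              1 + genHarm (p - 1) (2 - 2 * \<gamma>) / (Gamma \<gamma>)\<^sup>2
                + 1 / ((Gamma \<gamma>)\<^sup>2 * real p powr (2 - 2 * \<gamma>))
                    * (1 / (betaC \<gamma> p * (2 - betaC \<gamma> p))))
       \<and> (\<exists>K::real. \<forall>(\<gamma>::real) (n::nat) (p::nat). 0 < \<gamma> \<and> \<gamma> < 1 \<and> 2 \<le> p \<and> p \<le> n \<longrightarrow>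
            norm12 (Cmat \<gamma> p n) \<le>
              (if \<gamma> < 1/2 then K / sqrt (1/2 - \<gamma>)
               else if \<gamma> = 1/2 then K * sqrt (ln (real p))
               else K * real p powr (\<gamma> - 1/2) / sqrt ((1 - \<gamma>) * (\<gamma> - 1/2))))"
  using norm12_Cmat_sq_le norm12_Cmat_le by blast

end
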